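(* Let $h:[0,\infty)\to[0,\infty)$ be differentiable with $\lim_{x\to\infty}h'(x)=0$, and suppose there is $x_0\ge0$ such that $h$ is concave on $[x_0,\infty)$; let $\rho_h$ be the finite positive measure on $[x_0,\infty)$ with $h'(x)=\rho_h([x,\infty))$ for $x\ge x_0$. Let $Z$ be a nonnegative random variable and $\phi(\lambda)=-\log\mathbb{E}[e^{-\lambda Z}]$. 1) $\mathbb{E}[h(Z)]<\infty$ if and only if $\int_{x_0}^\infty\min\big(1,\phi(1/x)\big)\,x\,\rho_h(dx)<\infty$. 2) Assume $Z$ is infinitely divisible with $\phi(\lambda)=d\lambda+\int_{(0,\infty)}(1-e^{-\lambda x})\Pi(dx)$, $d\ge0$, $\int(x\wedge1)\Pi(dx)<\infty$. Then the following are equivalent: (i) $\mathbb{E}[h(Z)]<\infty$; (ii) $\int_{[x_0,\infty)}\chi_h(u)\Pi(du)<\infty$, where $\chi_h(u)=\int_{[x_0,\infty)}(x\wedge u)\rho_h(dx)$, which for $u\ge x_0$ equals $h(u)-h(x_0)+x_0h'(x_0)$; (iii) $\int_{[x_0,\infty)}\big(h(u)-h(x_0)\big)\Pi(du)<\infty$. *)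

theory Defs
  imports "HOL-Probability.Probability"
begin

definition laplace_exponent :: "'a measure \<Rightarrow> ('a \<Rightarrow> real) \<Rightarrow> real \<Rightarrow> real" where
  "laplace_exponent M Z l = - ln (\<integral>\<omega>. exp (- l * Z \<omega>) \<partial>M)"

definition chi :: "real measure \<Rightarrow> real \<Rightarrow> real \<Rightarrow> ennreal" where
  "chi rho x0 u = (\<integral>\<^sup>+ x \<in> {x0..}. ennreal (min x u) \<partial>rho)"

end

theory Submission
  imports Defs
begin

text \<open>
Since h' t = rho [t, oo) for t >= x0, Tonelli
gives chi u = h u - h x0 + x0 h' x0 for u >= x0, so h and chi differ by a bounded amount on
[0, oo). As rho and the law of Z are finite measures, additive and multiplicative constants do
not affect finiteness of integrals, so E h(Z) is finite iff E chi(Z), which by Tonelli is the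
integral of E min(x, Z) against rho, is finite. The estimate
(1 - exp (-1)) min 1 t <= 1 - exp (-t) <= min 1 t makes E min(x, Z), x (1 - exp (- phi (1/x)))
and x min(1, phi (1/x)) comparable, which gives part 1.

For infinitely divisible Z the same estimate inside the Levy-Khintchine formula makes
x min(1, phi (1/x)) comparable, up to additive constants, to the integral of min x u over
Pi restricted to [x0, oo), the part of Pi below x0 contributing a bounded amount. Integrating
against rho and applying Tonelli once more turns this into the integral of chi against Pi
on [x0, oo). There chi - (h - h x0) is the constant x0 h' x0, and Pi [x0, oo) is finite
when x0 > 0.
\<close>

lemma one_minus_exp_neg_bounds:
  fixes t :: real
  assumes "t \<ge> 0"
  shows "(1 - exp (-1)) * min 1 t \<le> 1 - exp (-t)" and "1 - exp (-t) \<le> min 1 t"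
proof -
  show "1 - exp (-t) \<le> min 1 t"
    using exp_ge_add_one_self[of "-t"] by simp
  show "(1 - exp (-1)) * min 1 t \<le> 1 - exp (-t)"
  proof (cases "t \<le> 1")
    case True
    have "exp ((1 - t) *\<^sub>R 0 + t *\<^sub>R (-1)) \<le> (1 - t) * exp 0 + t * exp (-1::real)"
      using convex_onD[OF exp_convex, of t 0 "-1"] True assms by simp
    then show ?thesis using True by (simp add: algebra_simps)
  qed simp
qed

lemma one_minus_exp_neg_scaled_bounds:
  fixes x z :: real
  assumes "x > 0" and "z \<ge> 0"
  shows "(1 - exp (-1)) * min x z \<le> x * (1 - exp (- (1/x) * z))"
    and "x * (1 - exp (- (1/x) * z)) \<le> min x z"
proof -
  have t: "z / x \<ge> 0" and m: "min x z = x * min 1 (z / x)" and e: "- (1/x) * z = - (z / x)"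
    using assms by (auto simp: min_def field_simps)
  show "(1 - exp (-1)) * min x z \<le> x * (1 - exp (- (1/x) * z))"
    using mult_left_mono[OF one_minus_exp_neg_bounds(1)[OF t], of x] assms
    unfolding m e by (simp add: mult_ac)
  show "x * (1 - exp (- (1/x) * z)) \<le> min x z"
    using mult_left_mono[OF one_minus_exp_neg_bounds(2)[OF t], of x] assms
    unfolding m e by simp
qed

lemma (in finite_measure) nn_integral_less_top_if_le_affine:
  assumes "b \<in> borel_measurable M" and "AE x in M. a x \<le> c * b x + k"
    and "c < \<infinity>" and "k < \<infinity>" and "integral\<^sup>N M b < \<infinity>"
  shows "integral\<^sup>N M a < \<infinity>"
proof -
  have "integral\<^sup>N M a \<le> (\<integral>\<^sup>+x. c * b x + k \<partial>M)"
    by (rule nn_integral_mono_AE) fact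
  also have "\<dots> = c * integral\<^sup>N M b + k * emeasure M (space M)"
    using assms(1) by (simp add: nn_integral_add nn_integral_cmult)
  also have "\<dots> < \<infinity>"
    using assms(3-5) emeasure_finite[of "space M", unfolded less_top]
    by (simp add: ennreal_mult_less_top)
  finally show ?thesis .
qed

lemma (in finite_measure) nn_integral_less_top_iff_comparable:
  assumes "a \<in> borel_measurable M" and "b \<in> borel_measurable M"
    and "AE x in M. a x \<le> c * b x + k" and "AE x in M. b x \<le> c' * a x + k'"
    and "c < \<infinity>" and "k < \<infinity>" and "c' < \<infinity>" and "k' < \<infinity>"
  shows "integral\<^sup>N M a < \<infinity> \<longleftrightarrow> integral\<^sup>N M b < \<infinity>"
  using nn_integral_less_top_if_le_affine[of b a c k] nn_integral_less_top_if_le_affine[of a b c' k'] assms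
  by blast

lemma min_le_max_one_mult_min_one:
  fixes x u :: real
  assumes "u \<ge> 0"
  shows "min x u \<le> max 1 x * min u 1"
  using assms mult_right_mono[of 1 x u] by (auto simp: min_def max_def)

section \<open>Laplace exponents\<close>

context prob_space
begin

lemma
  fixes Z :: "'a \<Rightarrow> real"
  assumes Z: "Z \<in> borel_measurable M" and Z_nonneg: "AE \<omega> in M. Z \<omega> \<ge> 0" and l: "l \<ge> 0"
  shows exp_neg_laplace_exponent: "exp (- laplace_exponent M Z l) = expectation (\<lambda>\<omega>. exp (- l * Z \<omega>))"
    and laplace_exponent_nonneg: "laplace_exponent M Z l \<ge> 0"
proof -
  let ?L = "expectation (\<lambda>\<omega>. exp (- l * Z \<omega>))"
  have int: "integrable M (\<lambda>\<omega>. exp (- l * Z \<omega>))"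
    using Z Z_nonneg by (intro integrable_const_bound[where B=1]) (auto elim!: eventually_mono simp: l)
  have "AE \<omega> in M. exp (- l * Z \<omega>) \<le> 1"
    using Z_nonneg by eventually_elim (use l in simp)
  then have "?L \<le> expectation (\<lambda>_. 1)"
    by (intro integral_mono_AE int) auto
  then have "?L \<le> 1"
    by (simp add: prob_space)
  moreover have "?L > 0"
  proof -
    have "?L \<noteq> 0"
      using integral_nonneg_eq_0_iff_AE[OF int] by auto
    then show ?thesis
      by (simp add: integral_nonneg_AE order_less_le)
  qed
  ultimately show "exp (- laplace_exponent M Z l) = ?L" and "laplace_exponent M Z l \<ge> 0"
    by (simp_all add: laplace_exponent_def)
qed

lemma expectation_min_laplace_exponent_bounds:
  fixes Z :: "'a \<Rightarrow> real" and x :: real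
  assumes Z: "Z \<in> borel_measurable M" and Z_nonneg: "AE \<omega> in M. Z \<omega> \<ge> 0" and x: "x > 0"
  defines "E \<equiv> expectation (\<lambda>\<omega>. min x (Z \<omega>))" and "p \<equiv> laplace_exponent M Z (1/x)"
  shows "(1 - exp (-1)) * E \<le> min 1 p * x" and "(1 - exp (-1)) * (min 1 p * x) \<le> E"
proof -
  define c :: real where "c = 1 - exp (-1)"
  have p: "p \<ge> 0" "exp (- p) = expectation (\<lambda>\<omega>. exp (- (1/x) * Z \<omega>))"
    using laplace_exponent_nonneg[OF Z Z_nonneg, of "1/x"]
      exp_neg_laplace_exponent[OF Z Z_nonneg, of "1/x"] x
    by (simp_all add: p_def)
  have int_exp: "integrable M (\<lambda>\<omega>. exp (- (1/x) * Z \<omega>))"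
    using Z Z_nonneg x by (intro integrable_const_bound[where B=1]) (auto elim!: eventually_mono)
  have int_min: "integrable M (\<lambda>\<omega>. min x (Z \<omega>))"
    using Z Z_nonneg x by (intro integrable_const_bound[where B=x]) (auto elim!: eventually_mono)
  have S: "expectation (\<lambda>\<omega>. x * (1 - exp (- (1/x) * Z \<omega>))) = x * (1 - exp (- p))"
    using int_exp p(2) by (simp add: prob_space)
  have lower: "AE \<omega> in M. c * min x (Z \<omega>) \<le> x * (1 - exp (- (1/x) * Z \<omega>))"
    using Z_nonneg by eventually_elim (rule one_minus_exp_neg_scaled_bounds(1)[OF x, folded c_def])
  have upper: "AE \<omega> in M. x * (1 - exp (- (1/x) * Z \<omega>)) \<le> min x (Z \<omega>)"
    using Z_nonneg by eventually_elim (rule one_minus_exp_neg_scaled_bounds(2)[OF x])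
  have "c * E = expectation (\<lambda>\<omega>. c * min x (Z \<omega>))"
    by (simp add: E_def)
  also have "\<dots> \<le> x * (1 - exp (- p))"
    unfolding S[symmetric] using lower int_exp int_min by (intro integral_mono_AE) auto
  also have "\<dots> \<le> min 1 p * x"
    using mult_left_mono[OF one_minus_exp_neg_bounds(2)[OF p(1)], of x] x by (simp add: mult.commute)
  finally show "(1 - exp (-1)) * E \<le> min 1 p * x"
    by (simp add: c_def)
  have "c * (min 1 p * x) \<le> x * (1 - exp (- p))"
    using mult_left_mono[OF one_minus_exp_neg_bounds(1)[OF p(1)], of x] x by (simp add: c_def mult_ac)
  also have "\<dots> \<le> E"
    unfolding E_def S[symmetric] using upper int_exp int_min by (intro integral_mono_AE) auto
  finally show "(1 - exp (-1)) * (min 1 p * x) \<le> E"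
    by (simp add: c_def)
qed

lemma nn_integral_min_laplace_exponent_bounds:
  fixes Z :: "'a \<Rightarrow> real" and x :: real
  assumes Z: "Z \<in> borel_measurable M" and Z_nonneg: "AE \<omega> in M. Z \<omega> \<ge> 0" and x: "x \<ge> 0"
  defines "C \<equiv> ennreal (1 / (1 - exp (-1)))"
  shows "(\<integral>\<^sup>+\<omega>. ennreal (min x (Z \<omega>)) \<partial>M) \<le> C * ennreal (min 1 (laplace_exponent M Z (1/x)) * x)"
    and "ennreal (min 1 (laplace_exponent M Z (1/x)) * x) \<le> C * (\<integral>\<^sup>+\<omega>. ennreal (min x (Z \<omega>)) \<partial>M)"
proof -
  define c :: real where "c = 1 - exp (-1)"
  have c: "c > 0" unfolding c_def by simp
  define p where "p = laplace_exponent M Z (1/x)"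
  define E where "E = expectation (\<lambda>\<omega>. min x (Z \<omega>))"
  have "c * E \<le> min 1 p * x \<and> c * (min 1 p * x) \<le> E"
  proof (cases "x = 0")
    case False
    then show ?thesis
      using expectation_min_laplace_exponent_bounds[OF Z Z_nonneg, of x] x
      by (simp add: c_def E_def p_def)
  next
    case True
    then show ?thesis
      using Z_nonneg by (simp add: E_def integral_eq_zero_AE min_def)
  qed
  moreover have "(\<integral>\<^sup>+\<omega>. ennreal (min x (Z \<omega>)) \<partial>M) = ennreal E"
    unfolding E_def using Z Z_nonneg x
    by (intro nn_integral_eq_integral integrable_const_bound[where B=x]) (auto elim!: eventually_mono)
  moreover have "E \<ge> 0"
    unfolding E_def using Z_nonneg x by (intro integral_nonneg_AE) (auto elim!: eventually_mono)
  moreover have "min 1 p * x \<ge> 0"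
    using x laplace_exponent_nonneg[OF Z Z_nonneg, of "1/x"] by (simp add: p_def)
  ultimately show "(\<integral>\<^sup>+\<omega>. ennreal (min x (Z \<omega>)) \<partial>M) \<le> C * ennreal (min 1 p * x)"
    and "ennreal (min 1 p * x) \<le> C * (\<integral>\<^sup>+\<omega>. ennreal (min x (Z \<omega>)) \<partial>M)"
    using c by (auto simp: C_def c_def[symmetric] ennreal_mult[symmetric] field_simps intro!: ennreal_leI)
qed

end

section \<open>Levy measures\<close>

locale levy_measure =
  fixes Pi :: "real measure"
  assumes sets_eq [measurable_cong]: "sets Pi = sets borel"
    and emeasure_nonpos: "emeasure Pi {..0} = 0"
    and nn_integral_min_one: "(\<integral>\<^sup>+u. ennreal (min u 1) \<partial>Pi) < \<infinity>"
begin

lemma AE_pos: "AE u in Pi. u > 0"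
  by (rule AE_I[where N="{..0}"]) (auto simp: emeasure_nonpos sets_eq)

lemma emeasure_atLeast_less_top:
  assumes a: "a > 0"
  shows "emeasure Pi {a..} < \<infinity>"
proof -
  have "emeasure Pi {a..} = (\<integral>\<^sup>+u. indicator {a..} u \<partial>Pi)"
    using sets_eq by simp
  also have "\<dots> \<le> (\<integral>\<^sup>+u. ennreal (1 / min a 1) * ennreal (min u 1) \<partial>Pi)"
  proof (rule nn_integral_mono)
    fix u
    have "u \<ge> a \<Longrightarrow> 1 \<le> (1 / min a 1) * min u 1"
      using a by (simp add: field_simps)
    then show "indicator {a..} u \<le> ennreal (1 / min a 1) * ennreal (min u 1)"
      using a by (auto simp: indicator_def ennreal_mult[symmetric] intro: ennreal_leI)
  qed
  also have "\<dots> = ennreal (1 / min a 1) * (\<integral>\<^sup>+u. ennreal (min u 1) \<partial>Pi)"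
    by (rule nn_integral_cmult) simp
  also have "\<dots> < \<infinity>"
    using nn_integral_min_one by (simp add: ennreal_mult_less_top)
  finally show ?thesis .
qed

sublocale sigma_finite_measure Pi
proof
  let ?A = "insert {..0} (range (\<lambda>n::nat. {1 / Suc n..}))"
  have "\<Union>?A = UNIV"
  proof (intro set_eqI iffI)
    fix x :: real
    show "x \<in> \<Union>?A"
    proof (cases "x \<le> 0")
      case False
      then obtain n where "inverse (Suc n) < x"
        using reals_Archimedean[of x] by (auto simp del: of_nat_Suc)
      then have "x \<in> {1 / Suc n..}" by (simp add: inverse_eq_divide)
      then show ?thesis by blast
    qed simp
  qed simp
  moreover have "\<forall>a\<in>?A. emeasure Pi a \<noteq> \<infinity>"
    using emeasure_nonpos emeasure_atLeast_less_top[of "1 / Suc _"]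
    by (auto simp: less_top[symmetric] simp del: of_nat_Suc)
  ultimately show "\<exists>A. countable A \<and> A \<subseteq> sets Pi \<and> \<Union>A = space Pi \<and> (\<forall>a\<in>A. emeasure Pi a \<noteq> \<infinity>)"
    using sets_eq sets_eq_imp_space_eq[OF sets_eq] by (intro exI[of _ ?A]) auto
qed

lemma nn_integral_one_minus_exp:
  assumes l: "l \<ge> 0"
  shows "(\<integral>\<^sup>+u. ennreal (1 - exp (- l * u)) \<partial>Pi) = ennreal (\<integral>u. 1 - exp (- l * u) \<partial>Pi)"
proof -
  have bound: "0 \<le> 1 - exp (- l * u) \<and> 1 - exp (- l * u) \<le> max 1 l * min u 1" if u: "u > 0" for u
  proof -
    have "1 - exp (- (l * u)) \<le> min 1 (l * u)"
      using one_minus_exp_neg_bounds(2)[of "l * u"] l u by simp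
    also have "\<dots> \<le> max 1 l * min u 1"
    proof (cases "u \<le> 1")
      case True
      have "l * u \<le> max 1 l * u" using u by (intro mult_right_mono) auto
      then show ?thesis using True min.cobounded2[of 1 "l * u"] by linarith
    qed auto
    finally show ?thesis using l u by simp
  qed
  have nonneg: "AE u in Pi. 0 \<le> 1 - exp (- l * u)"
    using AE_pos by eventually_elim (use bound in auto)
  have "(\<integral>\<^sup>+u. ennreal (1 - exp (- l * u)) \<partial>Pi) \<le> (\<integral>\<^sup>+u. ennreal (max 1 l) * ennreal (min u 1) \<partial>Pi)"
    using AE_pos by (intro nn_integral_mono_AE, eventually_elim)
      (use bound in \<open>auto simp: ennreal_mult[symmetric] intro: ennreal_leI\<close>)
  also have "\<dots> = ennreal (max 1 l) * (\<integral>\<^sup>+u. ennreal (min u 1) \<partial>Pi)"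
    by (rule nn_integral_cmult) simp
  also have "\<dots> < \<infinity>"
    using nn_integral_min_one by (simp add: ennreal_mult_less_top)
  finally have "integrable Pi (\<lambda>u. 1 - exp (- l * u))"
    by (intro integrableI_nonneg nonneg) simp_all
  then show ?thesis
    by (rule nn_integral_eq_integral[OF _ nonneg])
qed

definition bernstein :: "real \<Rightarrow> real \<Rightarrow> real" where
  "bernstein d l = d * l + (\<integral>u. 1 - exp (- l * u) \<partial>Pi)"

lemma ennreal_mult_bernstein:
  assumes d: "d \<ge> 0" and x: "x > 0"
  shows "ennreal (x * bernstein d (1/x)) = ennreal d + (\<integral>\<^sup>+u. ennreal (x * (1 - exp (- (1/x) * u))) \<partial>Pi)"
proof -
  let ?I = "\<integral>u. 1 - exp (- (1/x) * u) \<partial>Pi"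
  have "?I \<ge> 0"
    using AE_pos x by (intro integral_nonneg_AE) (auto elim!: eventually_mono)
  moreover have "x * bernstein d (1/x) = d + x * ?I"
    using x by (simp add: bernstein_def algebra_simps)
  ultimately have "ennreal (x * bernstein d (1/x)) = ennreal d + ennreal x * ennreal ?I"
    using d x by (simp add: ennreal_mult)
  also have "ennreal x * ennreal ?I = (\<integral>\<^sup>+u. ennreal x * ennreal (1 - exp (- (1/x) * u)) \<partial>Pi)"
    using x nn_integral_one_minus_exp[of "1/x"] by (simp add: nn_integral_cmult)
  also have "\<dots> = (\<integral>\<^sup>+u. ennreal (x * (1 - exp (- (1/x) * u))) \<partial>Pi)"
    using x by (simp add: ennreal_mult')
  finally show ?thesis .
qed

lemma nn_integral_min_le_restrict:
  "(\<integral>\<^sup>+u. ennreal (min x u) \<partial>Pi) \<le>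
    (\<integral>\<^sup>+u\<in>{a..}. ennreal (min x u) \<partial>Pi) + ennreal (max 1 a) * (\<integral>\<^sup>+u. ennreal (min u 1) \<partial>Pi)"
proof -
  have "(\<integral>\<^sup>+u. ennreal (min x u) \<partial>Pi) \<le>
      (\<integral>\<^sup>+u. ennreal (min x u) * indicator {a..} u + ennreal (max 1 a) * ennreal (min u 1) \<partial>Pi)"
    using AE_pos
  proof (intro nn_integral_mono_AE, eventually_elim)
    case (elim u)
    have "u < a \<Longrightarrow> min x u \<le> max 1 a * min u 1"
      using min_le_max_one_mult_min_one[of u a] elim by simp
    then show ?case
      using elim by (cases "u \<ge> a") (auto simp: ennreal_mult[symmetric] intro: ennreal_leI)
  qed
  also have "\<dots> = (\<integral>\<^sup>+u\<in>{a..}. ennreal (min x u) \<partial>Pi) + ennreal (max 1 a) * (\<integral>\<^sup>+u. ennreal (min u 1) \<partial>Pi)"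
    by (simp add: nn_integral_add nn_integral_cmult)
  finally show ?thesis .
qed

lemma min_bernstein_le_nn_integral_min:
  assumes d: "d \<ge> 0" and x: "x \<ge> 0"
  shows "ennreal (min 1 (bernstein d (1/x)) * x) \<le> ennreal d + (\<integral>\<^sup>+u. ennreal (min x u) \<partial>Pi)"
proof (cases "x = 0")
  case False
  with x have x: "x > 0" by simp
  have "ennreal (min 1 (bernstein d (1/x)) * x) \<le> ennreal (x * bernstein d (1/x))"
    using x by (intro ennreal_leI) (simp add: mult.commute mult_left_mono)
  also have "\<dots> \<le> ennreal d + (\<integral>\<^sup>+u. ennreal (min x u) \<partial>Pi)"
    unfolding ennreal_mult_bernstein[OF d x] using AE_pos
    by (intro add_left_mono nn_integral_mono_AE, eventually_elim)
      (use one_minus_exp_neg_scaled_bounds(2)[OF x] in \<open>auto intro: ennreal_leI\<close>)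
  finally show ?thesis .
qed simp

lemma nn_integral_min_le_min_bernstein:
  assumes d: "d \<ge> 0" and x: "x \<ge> 0"
  defines "m \<equiv> \<integral>\<^sup>+u. ennreal (min u 1) \<partial>Pi"
  shows "(\<integral>\<^sup>+u. ennreal (min x u) \<partial>Pi) \<le>
    (ennreal (1 / (1 - exp (-1))) + m) * ennreal (min 1 (bernstein d (1/x)) * x) + m"
proof (cases "x = 0")
  case False
  with x have x: "x > 0" by simp
  define c :: real where "c = 1 - exp (-1)"
  have c: "c > 0" unfolding c_def by simp
  let ?A = "\<integral>\<^sup>+u. ennreal (min x u) \<partial>Pi"
  let ?T = "ennreal (min 1 (bernstein d (1/x)) * x)"
  show ?thesis
  proof (cases "bernstein d (1/x) \<le> 1")
    case True
    have "ennreal c * ?A = (\<integral>\<^sup>+u. ennreal (c * min x u) \<partial>Pi)"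
      using c by (simp add: nn_integral_cmult[symmetric] ennreal_mult')
    also have "\<dots> \<le> (\<integral>\<^sup>+u. ennreal (x * (1 - exp (- (1/x) * u))) \<partial>Pi)"
      using AE_pos by (intro nn_integral_mono_AE, eventually_elim)
        (use one_minus_exp_neg_scaled_bounds(1)[OF x] in \<open>auto intro: ennreal_leI simp: c_def\<close>)
    also have "\<dots> \<le> ?T"
      using True ennreal_mult_bernstein[OF d x] by (simp add: mult.commute)
    finally have "ennreal (1 / c) * (ennreal c * ?A) \<le> ennreal (1 / c) * ?T"
      by (rule mult_left_mono) simp
    then have "?A \<le> ennreal (1 / c) * ?T"
      using c by (simp add: mult.assoc[symmetric] ennreal_mult[symmetric])
    then show ?thesis
      unfolding c_def by (simp add: distrib_right add.assoc add_increasing2)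
  next
    case False
    then have T: "?T = ennreal x" by simp
    have "?A \<le> (\<integral>\<^sup>+u. ennreal (max 1 x) * ennreal (min u 1) \<partial>Pi)"
      using AE_pos by (intro nn_integral_mono_AE, eventually_elim)
        (use min_le_max_one_mult_min_one in \<open>auto simp: ennreal_mult[symmetric] intro: ennreal_leI\<close>)
    also have "\<dots> = ennreal (max 1 x) * m"
      unfolding m_def by (rule nn_integral_cmult) simp
    also have "\<dots> \<le> ennreal (1 + x) * m"
      using x by (intro mult_right_mono ennreal_leI) auto
    also have "\<dots> = m * ?T + m"
      using x False by (simp add: ennreal_plus distrib_left add.commute mult.commute)
    finally show ?thesis
      by (simp add: distrib_right add.assoc add_increasing)
  qed
qed (auto simp: m_def intro!: nn_integral_mono ennreal_leI)

end

section \<open>Functions whose derivative is the tail of a finite measure\<close>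

lemma nn_integral_min_eq_tail_integral:
  fixes rho :: "real measure" and a u :: real
  assumes sets_rho [measurable_cong]: "sets rho = sets borel" and "sigma_finite_measure rho"
    and support: "AE x in rho. x \<ge> a" and a: "0 \<le> a" and u: "a \<le> u"
  shows "(\<integral>\<^sup>+x. ennreal (min x u) \<partial>rho) =
    ennreal a * emeasure rho UNIV + (\<integral>\<^sup>+t\<in>{a..u}. emeasure rho {t..} \<partial>lborel)"
proof -
  interpret pair_sigma_finite lborel rho
    by (simp add: pair_sigma_finite_def lborel.sigma_finite_measure_axioms assms(2))
  define f :: "real \<Rightarrow> real \<Rightarrow> ennreal"
    where "f t x = indicator {t. a \<le> t \<and> t \<le> u \<and> t \<le> x} t" for t x
  have f_meas: "case_prod f \<in> borel_measurable (lborel \<Otimes>\<^sub>M rho)"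
    unfolding f_def by measurable
  have inner_lborel: "(\<integral>\<^sup>+t. f t x \<partial>lborel) = ennreal (min x u - a)" if "x \<ge> a" for x
  proof -
    have "f t x = indicator {a..min x u} t" for t
      by (auto simp: f_def indicator_def)
    then show ?thesis using that u by simp
  qed
  have inner_rho: "(\<integral>\<^sup>+x. f t x \<partial>rho) = emeasure rho {t..} * indicator {a..u} t" for t
  proof -
    have "(\<integral>\<^sup>+x. f t x \<partial>rho) = (\<integral>\<^sup>+x. indicator {t..} x * indicator {a..u} t \<partial>rho)"
      by (rule nn_integral_cong) (auto simp: f_def indicator_def)
    then show ?thesis using sets_rho by (simp add: nn_integral_multc)
  qed
  have "(\<integral>\<^sup>+x. ennreal (min x u) \<partial>rho) = (\<integral>\<^sup>+x. ennreal a + ennreal (min x u - a) \<partial>rho)"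
    using support by (intro nn_integral_cong_AE, eventually_elim)
      (use a u in \<open>simp add: ennreal_plus[symmetric] del: ennreal_plus\<close>)
  also have "\<dots> = ennreal a * emeasure rho (space rho) + (\<integral>\<^sup>+x. ennreal (min x u - a) \<partial>rho)"
    by (simp add: nn_integral_add)
  also have "(\<integral>\<^sup>+x. ennreal (min x u - a) \<partial>rho) = (\<integral>\<^sup>+x. (\<integral>\<^sup>+t. f t x \<partial>lborel) \<partial>rho)"
    using support by (intro nn_integral_cong_AE) (auto elim!: eventually_mono simp: inner_lborel)
  also have "\<dots> = (\<integral>\<^sup>+t. (\<integral>\<^sup>+x. f t x \<partial>rho) \<partial>lborel)"
    by (rule Fubini'[OF f_meas])
  finally show ?thesis
    using sets_eq_imp_space_eq[OF sets_rho] by (simp add: inner_rho)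
qed

locale tail_derivative =
  fixes h h' :: "real \<Rightarrow> real" and x0 :: real and rho :: "real measure"
  assumes h_nonneg: "\<forall>x\<ge>0. h x \<ge> 0"
    and h_deriv: "\<forall>x\<ge>0. (h has_real_derivative h' x) (at x within {0..})"
    and x0_nonneg: "x0 \<ge> 0"
    and sets_rho [measurable_cong]: "sets rho = sets borel"
    and finite_rho: "finite_measure rho"
    and emeasure_below_x0: "emeasure rho {..<x0} = 0"
    and h'_eq_tail: "\<forall>x\<ge>x0. h' x = measure rho {x..}"
begin

sublocale rho: finite_measure rho by (fact finite_rho)

lemma AE_ge_x0: "AE x in rho. x \<ge> x0"
  by (rule AE_I[where N="{..<x0}"]) (auto simp: emeasure_below_x0 sets_rho)

lemma emeasure_atLeast_eq_h':
  assumes "x \<ge> x0"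
  shows "emeasure rho {x..} = ennreal (h' x)"
  using assms h'_eq_tail by (simp add: rho.emeasure_eq_measure)

lemma emeasure_UNIV_eq_h': "emeasure rho UNIV = ennreal (h' x0)"
proof -
  have "emeasure rho UNIV = emeasure rho {x0..}"
    using AE_ge_x0 sets_rho by (intro emeasure_eq_AE) auto
  then show ?thesis by (simp add: emeasure_atLeast_eq_h')
qed

lemma continuous_on_h: "continuous_on {0..} h"
  by (rule DERIV_continuous_on) (use h_deriv in auto)

lemma h'_nonneg: "x \<ge> x0 \<Longrightarrow> h' x \<ge> 0"
  using h'_eq_tail by simp

lemma has_integral_h':
  assumes u: "u \<ge> x0"
  shows "(h' has_integral h u - h x0) {x0..u}"
proof (rule fundamental_theorem_of_calculus[OF u])
  fix t assume "t \<in> {x0..u}"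
  then have "(h has_real_derivative h' t) (at t within {0..})"
    using h_deriv x0_nonneg by auto
  then have "(h has_real_derivative h' t) (at t within {x0..u})"
    by (rule has_field_derivative_subset) (use x0_nonneg in auto)
  then show "(h has_vector_derivative h' t) (at t within {x0..u})"
    by (simp add: has_real_derivative_iff_has_vector_derivative)
qed

lemma h_x0_le: "u \<ge> x0 \<Longrightarrow> h x0 \<le> h u"
  using has_integral_nonneg[OF has_integral_h', of u] h'_nonneg by simp

lemma nn_integral_emeasure_atLeast_eq:
  assumes "u \<ge> x0"
  shows "(\<integral>\<^sup>+t\<in>{x0..u}. emeasure rho {t..} \<partial>lborel) = ennreal (h u - h x0)"
proof -
  have "(\<integral>\<^sup>+t\<in>{x0..u}. emeasure rho {t..} \<partial>lborel) = (\<integral>\<^sup>+t. ennreal (h' t) * indicator {x0..u} t \<partial>lborel)"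
    by (intro nn_integral_cong) (simp add: indicator_def emeasure_atLeast_eq_h')
  also have "\<dots> = ennreal (h u - h x0)"
    using h'_nonneg by (intro nn_integral_has_integral_lebesgue' has_integral_h' assms) auto
  finally show ?thesis .
qed

lemma chi_eq_nn_integral: "chi rho x0 u = (\<integral>\<^sup>+x. ennreal (min x u) \<partial>rho)"
  unfolding chi_def using AE_ge_x0 by (intro nn_integral_cong_AE) (auto elim!: eventually_mono)

lemma chi_eq:
  assumes u: "u \<ge> x0"
  shows "chi rho x0 u = ennreal (h u - h x0 + x0 * h' x0)"
  unfolding chi_eq_nn_integral
  using nn_integral_min_eq_tail_integral[OF sets_rho rho.sigma_finite_measure_axioms AE_ge_x0 x0_nonneg u]
    nn_integral_emeasure_atLeast_eq[OF u] h_x0_le[OF u] x0_nonneg h'_nonneg[of x0]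
  by (simp add: emeasure_UNIV_eq_h' ennreal_mult[symmetric] ennreal_plus[symmetric] add.commute
      del: ennreal_plus)

lemma chi_mono: "u \<le> v \<Longrightarrow> chi rho x0 u \<le> chi rho x0 v"
  unfolding chi_eq_nn_integral by (intro nn_integral_mono ennreal_leI) auto

lemma borel_measurable_chi [measurable]: "chi rho x0 \<in> borel_measurable borel"
  unfolding chi_eq_nn_integral[abs_def] by measurable

lemma h_chi_bounded_difference:
  obtains K where "\<And>u. u \<ge> 0 \<Longrightarrow> ennreal (h u) \<le> chi rho x0 u + ennreal K"
    and "\<And>u. u \<ge> 0 \<Longrightarrow> chi rho x0 u \<le> ennreal (h u) + ennreal K"
proof -
  obtain B where B: "\<And>u. u \<in> {0..x0} \<Longrightarrow> h u \<le> B"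
    using compact_attains_sup[of "h ` {0..x0}"]
      compact_continuous_image[OF continuous_on_subset[OF continuous_on_h], of "{0..x0}"]
    by fastforce
  have h'x0: "h' x0 \<ge> 0"
    by (simp add: h'_nonneg)
  define K where "K = \<bar>B\<bar> + \<bar>h x0 - x0 * h' x0\<bar> + x0 * h' x0"
  have K: "K \<ge> \<bar>h x0 - x0 * h' x0\<bar>" "K \<ge> B" "K \<ge> x0 * h' x0"
    unfolding K_def using mult_nonneg_nonneg[OF x0_nonneg h'x0] abs_ge_self[of B]
      abs_ge_zero[of B] abs_ge_zero[of "h x0 - x0 * h' x0"] by linarith+
  have "ennreal (h u) \<le> chi rho x0 u + ennreal K \<and> chi rho x0 u \<le> ennreal (h u) + ennreal K"
    if u: "u \<ge> 0" for u
  proof (cases "u \<ge> x0")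
    case True
    have "h u \<le> (h u - h x0 + x0 * h' x0) + K" and "h u - h x0 + x0 * h' x0 \<le> h u + K"
      using K(1) by (simp_all add: abs_le_iff)
    moreover have "h u - h x0 + x0 * h' x0 \<ge> 0" "h u \<ge> 0" "K \<ge> 0"
      using K(1) h_x0_le[OF True] mult_nonneg_nonneg[OF x0_nonneg h'x0] h_nonneg u
      by auto
    ultimately show ?thesis
      by (simp add: chi_eq[OF True] ennreal_plus[symmetric] ennreal_leI del: ennreal_plus)
  next
    case False
    have "chi rho x0 u \<le> chi rho x0 x0"
      using False by (intro chi_mono) simp
    also have "\<dots> \<le> ennreal K"
      using K by (simp add: chi_eq)
    finally show ?thesis
      using B[of u] K u False by (auto intro: add_increasing add_increasing2 ennreal_leI)
  qed
  then show ?thesis using that by blast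
qed

lemma borel_measurable_h_max0 [measurable]: "(\<lambda>u. h (max 0 u)) \<in> borel_measurable borel"
  by (intro borel_measurable_continuous_onI continuous_on_compose2[OF continuous_on_h])
    (auto intro!: continuous_intros)

lemma nn_integral_h_less_top_iff_chi:
  assumes "prob_space M" and Z [measurable]: "Z \<in> borel_measurable M"
    and Z_nonneg: "AE \<omega> in M. Z \<omega> \<ge> 0"
  shows "(\<integral>\<^sup>+\<omega>. ennreal (h (Z \<omega>)) \<partial>M) < \<infinity> \<longleftrightarrow> (\<integral>\<^sup>+\<omega>. chi rho x0 (Z \<omega>) \<partial>M) < \<infinity>"
proof -
  \<comment> \<open>h need not be measurable off [0, oo); h (max 0 Z) agrees with h Z almost surely.\<close>
  interpret prob_space M by fact
  obtain K where K: "\<And>u. u \<ge> 0 \<Longrightarrow> ennreal (h u) \<le> chi rho x0 u + ennreal K"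
    "\<And>u. u \<ge> 0 \<Longrightarrow> chi rho x0 u \<le> ennreal (h u) + ennreal K"
    using h_chi_bounded_difference by blast
  have "(\<integral>\<^sup>+\<omega>. ennreal (h (Z \<omega>)) \<partial>M) = (\<integral>\<^sup>+\<omega>. ennreal (h (max 0 (Z \<omega>))) \<partial>M)"
    using Z_nonneg by (intro nn_integral_cong_AE) (auto elim!: eventually_mono)
  also have "\<dots> < \<infinity> \<longleftrightarrow> (\<integral>\<^sup>+\<omega>. chi rho x0 (Z \<omega>) \<partial>M) < \<infinity>"
    using Z_nonneg
    by (intro nn_integral_less_top_iff_comparable[where c=1 and c'=1 and k="ennreal K" and k'="ennreal K"])
      (auto elim!: eventually_mono simp: K)
  finally show ?thesis .
qed

lemma nn_integral_chi_comp_eq: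
  assumes "sigma_finite_measure M" and Z [measurable]: "Z \<in> borel_measurable M"
  shows "(\<integral>\<^sup>+\<omega>. chi rho x0 (Z \<omega>) \<partial>M) = (\<integral>\<^sup>+x. (\<integral>\<^sup>+\<omega>. ennreal (min x (Z \<omega>)) \<partial>M) \<partial>rho)"
proof -
  interpret pair_sigma_finite M rho
    by (simp add: pair_sigma_finite_def assms(1) rho.sigma_finite_measure_axioms)
  have "case_prod (\<lambda>\<omega> x. ennreal (min x (Z \<omega>))) \<in> borel_measurable (M \<Otimes>\<^sub>M rho)"
    by measurable
  then show ?thesis
    unfolding chi_eq_nn_integral by (rule Fubini'[symmetric])
qed

lemma nn_integral_h_less_top_iff_laplace_exponent:
  assumes "prob_space M" and Z [measurable]: "Z \<in> borel_measurable M"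
    and Z_nonneg: "AE \<omega> in M. Z \<omega> \<ge> 0"
  shows "(\<integral>\<^sup>+\<omega>. ennreal (h (Z \<omega>)) \<partial>M) < \<infinity> \<longleftrightarrow>
    (\<integral>\<^sup>+x\<in>{x0..}. ennreal (min 1 (laplace_exponent M Z (1/x)) * x) \<partial>rho) < \<infinity>"
proof -
  interpret prob_space M by fact
  define e where "e x = (\<integral>\<^sup>+\<omega>. ennreal (min x (Z \<omega>)) \<partial>M)" for x
  define T where "T x = ennreal (min 1 (laplace_exponent M Z (1/x)) * x)" for x
  define C where "C = ennreal (1 / (1 - exp (-1)))"
  have "e \<in> borel_measurable rho"
    unfolding e_def by measurable
  moreover have "T \<in> borel_measurable rho"
    unfolding T_def laplace_exponent_def by measurable
  moreover have "AE x in rho. e x \<le> C * T x \<and> T x \<le> C * e x"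
    using AE_ge_x0
  proof eventually_elim
    case (elim x)
    then show ?case
      using nn_integral_min_laplace_exponent_bounds[OF Z Z_nonneg, of x] x0_nonneg
      by (simp add: e_def T_def C_def)
  qed
  ultimately have "(\<integral>\<^sup>+x. e x \<partial>rho) < \<infinity> \<longleftrightarrow> (\<integral>\<^sup>+x. T x \<partial>rho) < \<infinity>"
    by (intro rho.nn_integral_less_top_iff_comparable[where c=C and k=0 and c'=C and k'=0])
      (auto simp: C_def elim!: eventually_mono)
  moreover have "(\<integral>\<^sup>+x. T x \<partial>rho) = (\<integral>\<^sup>+x\<in>{x0..}. T x \<partial>rho)"
    using AE_ge_x0 by (intro nn_integral_cong_AE) (auto elim!: eventually_mono)
  ultimately show ?thesis
    using nn_integral_h_less_top_iff_chi[OF assms] nn_integral_chi_comp_eq[OF sigma_finite_measure_axioms Z]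
    by (simp add: e_def T_def)
qed

lemma nn_integral_chi_levy_eq:
  fixes Pi :: "real measure"
  assumes "levy_measure Pi"
  shows "(\<integral>\<^sup>+u\<in>{x0..}. chi rho x0 u \<partial>Pi) = (\<integral>\<^sup>+x. (\<integral>\<^sup>+u\<in>{x0..}. ennreal (min x u) \<partial>Pi) \<partial>rho)"
proof -
  interpret Pi: levy_measure Pi by fact
  interpret pair_sigma_finite rho Pi
    by (simp add: pair_sigma_finite_def Pi.sigma_finite_measure_axioms rho.sigma_finite_measure_axioms)
  have meas: "case_prod (\<lambda>x u. ennreal (min x u) * indicator {x0..} u) \<in> borel_measurable (rho \<Otimes>\<^sub>M Pi)"
    by measurable
  have "(\<integral>\<^sup>+u\<in>{x0..}. chi rho x0 u \<partial>Pi) = (\<integral>\<^sup>+u. (\<integral>\<^sup>+x. ennreal (min x u) * indicator {x0..} u \<partial>rho) \<partial>Pi)"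
    unfolding chi_eq_nn_integral by (intro nn_integral_cong) (simp add: nn_integral_multc)
  also have "\<dots> = (\<integral>\<^sup>+x. (\<integral>\<^sup>+u\<in>{x0..}. ennreal (min x u) \<partial>Pi) \<partial>rho)"
    by (rule Fubini'[OF meas])
  finally show ?thesis .
qed

lemma bernstein_less_top_iff_chi:
  fixes Pi :: "real measure"
  assumes "levy_measure Pi" and d: "d \<ge> 0"
  shows "(\<integral>\<^sup>+x\<in>{x0..}. ennreal (min 1 (levy_measure.bernstein Pi d (1/x)) * x) \<partial>rho) < \<infinity> \<longleftrightarrow>
    (\<integral>\<^sup>+u\<in>{x0..}. chi rho x0 u \<partial>Pi) < \<infinity>"
proof -
  interpret Pi: levy_measure Pi by fact
  define T where "T x = ennreal (min 1 (Pi.bernstein d (1/x)) * x)" for x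
  define B where "B x = (\<integral>\<^sup>+u\<in>{x0..}. ennreal (min x u) \<partial>Pi)" for x
  define m where "m = (\<integral>\<^sup>+u. ennreal (min u 1) \<partial>Pi)"
  define C where "C = ennreal (1 / (1 - exp (-1)))"
  have "B \<in> borel_measurable rho"
    unfolding B_def by measurable
  moreover have "T \<in> borel_measurable rho"
    unfolding T_def Pi.bernstein_def by measurable
  moreover have "AE x in rho. T x \<le> 1 * B x + (ennreal d + ennreal (max 1 x0) * m)
      \<and> B x \<le> (C + m) * T x + m"
    using AE_ge_x0
  proof eventually_elim
    case (elim x)
    with x0_nonneg have x: "x \<ge> 0" by simp
    have "T x \<le> ennreal d + (\<integral>\<^sup>+u. ennreal (min x u) \<partial>Pi)"
      unfolding T_def by (rule Pi.min_bernstein_le_nn_integral_min[OF d x])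
    also have "\<dots> \<le> ennreal d + (B x + ennreal (max 1 x0) * m)"
      unfolding B_def m_def by (intro add_left_mono Pi.nn_integral_min_le_restrict)
    finally have "T x \<le> 1 * B x + (ennreal d + ennreal (max 1 x0) * m)"
      by (simp add: add_ac)
    moreover have "B x \<le> (\<integral>\<^sup>+u. ennreal (min x u) \<partial>Pi)"
      unfolding B_def by (intro nn_integral_mono) (simp add: indicator_def)
    ultimately show ?case
      using Pi.nn_integral_min_le_min_bernstein[OF d x] by (simp add: T_def m_def C_def)
  qed
  moreover have "m < \<infinity>"
    unfolding m_def by (rule Pi.nn_integral_min_one)
  ultimately have "(\<integral>\<^sup>+x. T x \<partial>rho) < \<infinity> \<longleftrightarrow> (\<integral>\<^sup>+x. B x \<partial>rho) < \<infinity>"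
    by (intro rho.nn_integral_less_top_iff_comparable[where c=1 and k="ennreal d + ennreal (max 1 x0) * m"
          and c'="C + m" and k'=m])
      (auto simp: C_def ennreal_mult_less_top elim!: eventually_mono)
  moreover have "(\<integral>\<^sup>+x. T x \<partial>rho) = (\<integral>\<^sup>+x\<in>{x0..}. T x \<partial>rho)"
    using AE_ge_x0 by (intro nn_integral_cong_AE) (auto elim!: eventually_mono)
  ultimately show ?thesis
    using nn_integral_chi_levy_eq[OF assms(1)] by (simp add: T_def B_def)
qed

lemma chi_less_top_iff_h:
  fixes Pi :: "real measure"
  assumes "levy_measure Pi"
  shows "(\<integral>\<^sup>+u\<in>{x0..}. chi rho x0 u \<partial>Pi) < \<infinity> \<longleftrightarrow> (\<integral>\<^sup>+u\<in>{x0..}. ennreal (h u - h x0) \<partial>Pi) < \<infinity>"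
proof -
  interpret Pi: levy_measure Pi by fact
  define C0 where "C0 = x0 * h' x0"
  have C0: "C0 \<ge> 0"
    unfolding C0_def using x0_nonneg h'_nonneg[of x0] by simp
  have "(\<integral>\<^sup>+u\<in>{x0..}. chi rho x0 u \<partial>Pi) =
      (\<integral>\<^sup>+u. ennreal (h (max 0 u) - h x0) * indicator {x0..} u + ennreal C0 * indicator {x0..} u \<partial>Pi)"
  proof (intro nn_integral_cong)
    fix u
    show "chi rho x0 u * indicator {x0..} u =
      ennreal (h (max 0 u) - h x0) * indicator {x0..} u + ennreal C0 * indicator {x0..} u"
      using x0_nonneg h_x0_le[of u] C0
      by (cases "u \<ge> x0") (simp_all add: chi_eq C0_def ennreal_plus[symmetric] del: ennreal_plus)
  qed
  also have "\<dots> = (\<integral>\<^sup>+u. ennreal (h (max 0 u) - h x0) * indicator {x0..} u \<partial>Pi)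
      + (\<integral>\<^sup>+u. ennreal C0 * indicator {x0..} u \<partial>Pi)"
    by (rule nn_integral_add) auto
  also have "(\<integral>\<^sup>+u. ennreal (h (max 0 u) - h x0) * indicator {x0..} u \<partial>Pi) =
      (\<integral>\<^sup>+u\<in>{x0..}. ennreal (h u - h x0) \<partial>Pi)"
    using x0_nonneg by (intro nn_integral_cong) (auto simp: indicator_def)
  also have "(\<integral>\<^sup>+u. ennreal C0 * indicator {x0..} u \<partial>Pi) = ennreal C0 * emeasure Pi {x0..}"
    by (simp add: nn_integral_cmult_indicator)
  finally have eq: "(\<integral>\<^sup>+u\<in>{x0..}. chi rho x0 u \<partial>Pi) =
      (\<integral>\<^sup>+u\<in>{x0..}. ennreal (h u - h x0) \<partial>Pi) + ennreal C0 * emeasure Pi {x0..}" .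
  have "ennreal C0 * emeasure Pi {x0..} < \<infinity>"
  proof (cases "x0 = 0")
    case False
    then show ?thesis
      using x0_nonneg Pi.emeasure_atLeast_less_top[of x0] by (simp add: ennreal_mult_less_top)
  qed (simp add: C0_def)
  then show ?thesis
    unfolding eq by (simp add: less_top)
qed

lemma nn_integral_h_less_top_iff_levy:
  fixes Pi :: "real measure"
  assumes M: "prob_space M" and Z: "Z \<in> borel_measurable M" and Z_nonneg: "AE \<omega> in M. Z \<omega> \<ge> 0"
    and Pi: "levy_measure Pi" and d: "d \<ge> 0"
    and LK: "\<forall>l\<ge>0. laplace_exponent M Z l = d * l + (\<integral>x. (1 - exp (- l * x)) \<partial>Pi)"
  shows "(\<integral>\<^sup>+\<omega>. ennreal (h (Z \<omega>)) \<partial>M) < \<infinity> \<longleftrightarrow> (\<integral>\<^sup>+u\<in>{x0..}. chi rho x0 u \<partial>Pi) < \<infinity>"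
proof -
  interpret Pi: levy_measure Pi by fact
  have "(\<integral>\<^sup>+x\<in>{x0..}. ennreal (min 1 (laplace_exponent M Z (1/x)) * x) \<partial>rho) =
      (\<integral>\<^sup>+x\<in>{x0..}. ennreal (min 1 (Pi.bernstein d (1/x)) * x) \<partial>rho)"
    using LK x0_nonneg by (intro nn_integral_cong) (auto simp: Pi.bernstein_def indicator_def)
  then show ?thesis
    using nn_integral_h_less_top_iff_laplace_exponent[OF M Z Z_nonneg] bernstein_less_top_iff_chi[OF Pi d]
    by simp
qed

end

theorem lemma5:
  fixes h h' :: "real \<Rightarrow> real" and x0 :: real and rho :: "real measure"
    and M :: "'a measure" and Z :: "'a \<Rightarrow> real"
    and d :: real and Pi :: "real measure"
  assumes h_nonneg: "\<forall>x\<ge>0. h x \<ge> 0"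
    and h_deriv: "\<forall>x\<ge>0. (h has_real_derivative h' x) (at x within {0..})"
    and h'_lim: "(h' \<longlongrightarrow> 0) at_top"
    and x0: "x0 \<ge> 0"
    and concave: "concave_on {x0..} h"
    and rho_sets: "sets rho = sets borel"
    and rho_finite: "finite_measure rho"
    and rho_supp: "emeasure rho {..<x0} = 0"
    and rho_h': "\<forall>x\<ge>x0. h' x = measure rho {x..}"
    and M: "prob_space M"
    and Z_meas: "Z \<in> borel_measurable M"
    and Z_nonneg: "AE \<omega> in M. Z \<omega> \<ge> 0"
  shows "((\<integral>\<^sup>+ \<omega>. ennreal (h (Z \<omega>)) \<partial>M) < \<infinity> \<longleftrightarrow>
           (\<integral>\<^sup>+ x \<in> {x0..}. ennreal (min 1 (laplace_exponent M Z (1 / x)) * x) \<partial>rho) < \<infinity>)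
    \<and> (d \<ge> 0 \<and> sets Pi = sets borel \<and> emeasure Pi {..0} = 0
         \<and> (\<integral>\<^sup>+ x. ennreal (min x 1) \<partial>Pi) < \<infinity>
         \<and> (\<forall>l\<ge>0. laplace_exponent M Z l = d * l + (\<integral>x. (1 - exp (- l * x)) \<partial>Pi))
       \<longrightarrow> (\<forall>u\<ge>x0. chi rho x0 u = ennreal (h u - h x0 + x0 * h' x0))
         \<and> ((\<integral>\<^sup>+ \<omega>. ennreal (h (Z \<omega>)) \<partial>M) < \<infinity> \<longleftrightarrow>
              (\<integral>\<^sup>+ u \<in> {x0..}. chi rho x0 u \<partial>Pi) < \<infinity>)
         \<and> ((\<integral>\<^sup>+ u \<in> {x0..}. chi rho x0 u \<partial>Pi) < \<infinity> \<longleftrightarrow>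
              (\<integral>\<^sup>+ u \<in> {x0..}. ennreal (h u - h x0) \<partial>Pi) < \<infinity>))"
proof -
  interpret tail_derivative h h' x0 rho
    by (rule tail_derivative.intro) fact+
  show ?thesis
    using nn_integral_h_less_top_iff_laplace_exponent[OF M Z_meas Z_nonneg]
      nn_integral_h_less_top_iff_levy[OF M Z_meas Z_nonneg] chi_eq chi_less_top_iff_h
      levy_measure.intro[of Pi]
    by blast
qed

end
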